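(* If $X,Y,Z$ are independent real-valued continuous random variables, then $$h(X-Z)+h(Y)\leq h(X+Y)+h(Y+Z).$$
   Context: Standing conventions: all random variables are real-valued with densities, and every differential entropy $h$ appearing is assumed to exist and be finite. *)

theory Defs
  imports "HOL-Probability.Probability"
begin

end

theory Submission
  imports Defs
begin

(* Write f_V for the density of a random variable V.  A differential entropy is
   an expectation, h(V) = - E[log f_V(V)], so with
     p = f_{X+Y}(X+Y) * f_{Y+Z}(Y+Z)   and   q = f_{X-Z}(X-Z) * f_Y(Y)
   the claim reads E[log q] >= E[log p].  By Gibbs' inequality (log r <= (r - 1) / ln b)
   this follows from E[p / q] <= 1.  To bound E[p / q], use that (X, Z) and Y are
   independent: integrating out Y with X, Z fixed and d = X - Z gives at most K(d) / f_{X-Z}(d),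
   where K(d) = INT f_{X+Y}(d + s) f_{Y+Z}(s) ds (substitute s = y + Z).  Taking the
   expectation over d cancels f_{X-Z}, and INT K(d) dd = 1 by Fubini and translation
   invariance of Lebesgue measure. *)

lemma entropy_as_expectation:
  assumes "information_space M b"
    and fin: "information_space.finite_entropy M b lborel V f"
  shows "prob_space.entropy M b lborel V = - (\<integral>\<omega>. log b (f (V \<omega>)) \<partial>M)"
    and "integrable M (\<lambda>\<omega>. log b (f (V \<omega>)))"
    and "AE \<omega> in M. 0 < f (V \<omega>)"
proof -
  interpret information_space M b by fact
  have distr: "distributed M lborel V f" using fin by (rule finite_entropy_distributed)
  have nonneg: "\<And>x. 0 \<le> f x" using finite_entropy_nn[OF fin] by simp
  have [measurable]: "f \<in> borel_measurable lborel" using finite_entropy_measurable[OF fin] .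
  have V_measurable[measurable]: "V \<in> measurable M lborel"
    using distr by (rule distributed_measurable)
  have "integrable lborel (\<lambda>x. f x * log b (f x))" using fin by (rule finite_entropy_integrable)
  then show "integrable M (\<lambda>\<omega>. log b (f (V \<omega>)))"
    using distributed_integrable[OF distr, of "\<lambda>x. log b (f x)"] nonneg by simp
  show "prob_space.entropy M b lborel V = - (\<integral>\<omega>. log b (f (V \<omega>)) \<partial>M)"
    using entropy_distr[OF distr] nonneg distributed_integral[OF distr, of "\<lambda>x. log b (f x)"]
    by simp
  have "AE x in distr M lborel V. 0 < f x"
    unfolding distributed_distr_eq_density[OF distr] by (subst AE_density) (auto simp: nonneg)
  then show "AE \<omega> in M. 0 < f (V \<omega>)" by (rule AE_distrD[OF V_measurable])
qed

lemma entropy_sum_as_expectation: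
  assumes info: "information_space M b"
    and fin1: "information_space.finite_entropy M b lborel V1 f1"
    and fin2: "information_space.finite_entropy M b lborel V2 f2"
  shows "prob_space.entropy M b lborel V1 + prob_space.entropy M b lborel V2
           = - (\<integral>\<omega>. log b (f1 (V1 \<omega>) * f2 (V2 \<omega>)) \<partial>M)"
    and "integrable M (\<lambda>\<omega>. log b (f1 (V1 \<omega>) * f2 (V2 \<omega>)))"
    and "AE \<omega> in M. 0 < f1 (V1 \<omega>) * f2 (V2 \<omega>)"
    and "(\<lambda>\<omega>. f1 (V1 \<omega>) * f2 (V2 \<omega>)) \<in> borel_measurable M"
proof -
  interpret information_space M b by fact
  note e1 = entropy_as_expectation[OF info fin1] and e2 = entropy_as_expectation[OF info fin2]
  have [measurable]: "V1 \<in> borel_measurable M" "V2 \<in> borel_measurable M"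
    using finite_entropy_distributed[OF fin1, THEN distributed_measurable]
      finite_entropy_distributed[OF fin2, THEN distributed_measurable] by simp_all
  have [measurable]: "f1 \<in> borel_measurable borel" "f2 \<in> borel_measurable borel"
    using finite_entropy_measurable[OF fin1] finite_entropy_measurable[OF fin2] by simp_all
  show "(\<lambda>\<omega>. f1 (V1 \<omega>) * f2 (V2 \<omega>)) \<in> borel_measurable M" by measurable
  show "AE \<omega> in M. 0 < f1 (V1 \<omega>) * f2 (V2 \<omega>)"
    using e1(3) e2(3) by eventually_elim simp
  have log_product: "AE \<omega> in M. log b (f1 (V1 \<omega>)) + log b (f2 (V2 \<omega>))
                                 = log b (f1 (V1 \<omega>) * f2 (V2 \<omega>))"
    using e1(3) e2(3) by eventually_elim (simp add: log_mult)
  have sum_integrable: "integrable M (\<lambda>\<omega>. log b (f1 (V1 \<omega>)) + log b (f2 (V2 \<omega>)))"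
    using e1(2) e2(2) by simp
  then show "integrable M (\<lambda>\<omega>. log b (f1 (V1 \<omega>) * f2 (V2 \<omega>)))"
    using integrable_cong_AE[OF _ _ log_product] by simp
  have "(\<integral>\<omega>. log b (f1 (V1 \<omega>) * f2 (V2 \<omega>)) \<partial>M)
      = (\<integral>\<omega>. log b (f1 (V1 \<omega>)) + log b (f2 (V2 \<omega>)) \<partial>M)"
    using integral_cong_AE[OF _ _ log_product] by simp
  then show "prob_space.entropy M b lborel V1 + prob_space.entropy M b lborel V2
           = - (\<integral>\<omega>. log b (f1 (V1 \<omega>) * f2 (V2 \<omega>)) \<partial>M)"
    using e1 e2 by simp
qed

text \<open>Gibbs-type bound: a positive random variable with expectation at most one has
  nonpositive expected logarithm, since \<open>log\<^sub>b r \<le> (r - 1) / ln b\<close>.\<close>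

lemma expectation_log_nonpos:
  assumes "prob_space M" and b: "1 < b"
    and R_measurable: "R \<in> borel_measurable M"
    and R_pos: "AE \<omega> in M. 0 < R \<omega>"
    and R_mean: "(\<integral>\<^sup>+\<omega>. ennreal (R \<omega>) \<partial>M) \<le> 1"
    and log_integrable: "integrable M (\<lambda>\<omega>. log b (R \<omega>))"
  shows "(\<integral>\<omega>. log b (R \<omega>) \<partial>M) \<le> 0"
proof -
  interpret prob_space M by fact
  have R_nonneg: "AE \<omega> in M. 0 \<le> R \<omega>" using R_pos by eventually_elim simp
  have R_integrable: "integrable M R"
    using R_mean by (intro integrableI_nonneg[OF R_measurable R_nonneg]) (simp add: le_less_trans)
  have "ennreal (\<integral>\<omega>. R \<omega> \<partial>M) = (\<integral>\<^sup>+\<omega>. ennreal (R \<omega>) \<partial>M)"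
    using R_integrable R_nonneg by (rule nn_integral_eq_integral[symmetric])
  with R_mean have "ennreal (\<integral>\<omega>. R \<omega> \<partial>M) \<le> ennreal 1"
    by simp
  then have R_expectation: "(\<integral>\<omega>. R \<omega> \<partial>M) \<le> 1"
    by (subst (asm) ennreal_le_iff) auto
  have "AE \<omega> in M. log b (R \<omega>) \<le> (R \<omega> - 1) / ln b"
    using R_pos
  proof eventually_elim
    case (elim \<omega>)
    then show ?case
      using b ln_le_minus_one[OF elim] by (simp add: log_def divide_right_mono)
  qed
  then have "(\<integral>\<omega>. log b (R \<omega>) \<partial>M) \<le> (\<integral>\<omega>. (R \<omega> - 1) / ln b \<partial>M)"
    using log_integrable R_integrable by (intro integral_mono_AE) auto
  also have "\<dots> = ((\<integral>\<omega>. R \<omega> \<partial>M) - 1) / ln b"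
    using R_integrable by (simp add: prob_space)
  also have "\<dots> \<le> 0"
    using R_expectation b by (simp add: divide_le_0_iff)
  finally show ?thesis .
qed

lemma gibbs_inequality:
  assumes "prob_space M" and b: "1 < b"
    and [measurable]: "p \<in> borel_measurable M" "q \<in> borel_measurable M"
    and pos: "AE \<omega> in M. 0 < p \<omega>" "AE \<omega> in M. 0 < q \<omega>"
    and integrable: "integrable M (\<lambda>\<omega>. log b (p \<omega>))" "integrable M (\<lambda>\<omega>. log b (q \<omega>))"
    and ratio_mean: "(\<integral>\<^sup>+\<omega>. ennreal (p \<omega> / q \<omega>) \<partial>M) \<le> 1"
  shows "(\<integral>\<omega>. log b (p \<omega>) \<partial>M) \<le> (\<integral>\<omega>. log b (q \<omega>) \<partial>M)"
proof -
  have log_ratio: "AE \<omega> in M. log b (p \<omega>) - log b (q \<omega>) = log b (p \<omega> / q \<omega>)"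
    using pos by eventually_elim (simp add: log_divide)
  have "integrable M (\<lambda>\<omega>. log b (p \<omega>) - log b (q \<omega>))"
    using integrable by simp
  then have "integrable M (\<lambda>\<omega>. log b (p \<omega> / q \<omega>))"
    using integrable_cong_AE[OF _ _ log_ratio] by simp
  moreover have "AE \<omega> in M. 0 < p \<omega> / q \<omega>"
    using pos by eventually_elim simp
  ultimately have "(\<integral>\<omega>. log b (p \<omega> / q \<omega>) \<partial>M) \<le> 0"
    using ratio_mean by (intro expectation_log_nonpos[OF assms(1) b]) simp_all
  moreover have "(\<integral>\<omega>. log b (p \<omega> / q \<omega>) \<partial>M)
      = (\<integral>\<omega>. log b (p \<omega>) \<partial>M) - (\<integral>\<omega>. log b (q \<omega>) \<partial>M)"
    using integral_cong_AE[OF _ _ log_ratio] integrable by simp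
  ultimately show ?thesis by simp
qed

lemma nn_integral_indep_var:
  fixes A B :: "'a \<Rightarrow> 'b" and g :: "'b \<Rightarrow> 'b \<Rightarrow> ennreal"
  assumes "prob_space M"
    and indep: "prob_space.indep_var M N A N B"
    and g_measurable[measurable]: "(\<lambda>(p, q). g p q) \<in> borel_measurable (N \<Otimes>\<^sub>M N)"
  shows "(\<integral>\<^sup>+\<omega>. g (A \<omega>) (B \<omega>) \<partial>M) = (\<integral>\<^sup>+\<omega>. (\<integral>\<^sup>+\<omega>'. g (A \<omega>) (B \<omega>') \<partial>M) \<partial>M)"
proof -
  interpret prob_space M by fact
  have [measurable]: "random_variable N A" "random_variable N B"
    and joint: "distr M N A \<Otimes>\<^sub>M distr M N B = distr M (N \<Otimes>\<^sub>M N) (\<lambda>\<omega>. (A \<omega>, B \<omega>))"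
    using indep indep_var_distribution_eq by blast+
  interpret PA: prob_space "distr M N A" by (rule prob_space_distr) fact
  interpret PB: prob_space "distr M N B" by (rule prob_space_distr) fact
  interpret pair_sigma_finite "distr M N A" "distr M N B" ..
  have "(\<integral>\<^sup>+\<omega>. g (A \<omega>) (B \<omega>) \<partial>M)
      = (\<integral>\<^sup>+w. g (fst w) (snd w) \<partial>(distr M N A \<Otimes>\<^sub>M distr M N B))"
    by (simp add: joint nn_integral_distr split_beta')
  also have "\<dots> = (\<integral>\<^sup>+p. \<integral>\<^sup>+q. g p q \<partial>distr M N B \<partial>distr M N A)"
    by (subst PB.nn_integral_fst[symmetric]) (auto simp: split_beta')
  also have "\<dots> = (\<integral>\<^sup>+p. \<integral>\<^sup>+\<omega>'. g p (B \<omega>') \<partial>M \<partial>distr M N A)"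
    using measurable_Pair2[OF g_measurable] by (intro nn_integral_cong) (simp add: nn_integral_distr)
  also have "\<dots> = (\<integral>\<^sup>+\<omega>. (\<integral>\<^sup>+\<omega>'. g (A \<omega>) (B \<omega>') \<partial>M) \<partial>M)"
    by (simp add: nn_integral_distr)
  finally show ?thesis .
qed

text \<open>If \<open>X, Y, Z\<close> are independent then so are the pair \<open>(X, Z)\<close> and \<open>Y\<close>; the latter is
  embedded diagonally so that both variables take values in the same space.\<close>

lemma indep_var_pair_third:
  assumes "prob_space M"
    and indep: "prob_space.indep_vars M (\<lambda>_. borel)
                  (\<lambda>i::nat. if i = 0 then X else if i = 1 then Y else Z) {0, 1, 2}"
  shows "prob_space.indep_var M (borel \<Otimes>\<^sub>M borel) (\<lambda>\<omega>. (X \<omega>, Z \<omega> :: real))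
           (borel \<Otimes>\<^sub>M borel) (\<lambda>\<omega>. (Y \<omega>, Y \<omega> :: real))"
proof -
  interpret prob_space M by fact
  let ?F = "\<lambda>i::nat. if i = 0 then X else if i = 1 then Y else Z"
  have "indep_var (PiM {0, 2} (\<lambda>_. borel)) (\<lambda>\<omega>. restrict (\<lambda>i. ?F i \<omega>) {0, 2})
                  (PiM {1} (\<lambda>_. borel)) (\<lambda>\<omega>. restrict (\<lambda>i. ?F i \<omega>) {1})"
    by (rule indep_var_restrict[OF indep]) auto
  then have "indep_var (borel \<Otimes>\<^sub>M borel) ((\<lambda>f. (f 0, f 2)) \<circ> (\<lambda>\<omega>. restrict (\<lambda>i. ?F i \<omega>) {0, 2}))
                  (borel \<Otimes>\<^sub>M borel) ((\<lambda>f. (f 1, f 1)) \<circ> (\<lambda>\<omega>. restrict (\<lambda>i. ?F i \<omega>) {1}))"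
    by (rule indep_var_compose) auto
  then show ?thesis by (simp add: comp_def)
qed

lemma lborel_nn_integral_translate:
  fixes h :: "real \<Rightarrow> ennreal"
  assumes "h \<in> borel_measurable borel"
  shows "(\<integral>\<^sup>+y. h (t + y) \<partial>lborel) = (\<integral>\<^sup>+s. h s \<partial>lborel)"
  using nn_integral_real_affine[OF assms, of 1 t] by simp

lemma distributed_nn_integral_one:
  assumes "prob_space M" and "distributed M lborel V f"
  shows "(\<integral>\<^sup>+x. ennreal (f x) \<partial>lborel) = 1"
proof -
  interpret prob_space M by fact
  have "(\<integral>\<^sup>+x. ennreal (f x) * 1 \<partial>lborel) = (\<integral>\<^sup>+\<omega>. 1 \<partial>M)"
    by (rule distributed_nn_integral[OF assms(2)]) simp
  then show ?thesis by (simp add: emeasure_space_1)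
qed

lemma nn_integral_cross_correlation:
  fixes u v :: "real \<Rightarrow> ennreal"
  assumes [measurable]: "u \<in> borel_measurable borel" "v \<in> borel_measurable borel"
    and u_one: "(\<integral>\<^sup>+x. u x \<partial>lborel) = 1" and v_one: "(\<integral>\<^sup>+x. v x \<partial>lborel) = 1"
  shows "(\<integral>\<^sup>+d. (\<integral>\<^sup>+s. u (d + s) * v s \<partial>lborel) \<partial>lborel) = 1"
proof -
  have "(\<integral>\<^sup>+d. (\<integral>\<^sup>+s. u (d + s) * v s \<partial>lborel) \<partial>lborel)
      = (\<integral>\<^sup>+s. (\<integral>\<^sup>+d. u (d + s) * v s \<partial>lborel) \<partial>lborel)"
    by (rule lborel_pair.Fubini'[symmetric]) simp
  also have "\<dots> = (\<integral>\<^sup>+s. v s * (\<integral>\<^sup>+d. u (s + d) \<partial>lborel) \<partial>lborel)"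
    by (rule nn_integral_cong) (simp add: add.commute mult.commute nn_integral_cmult)
  also have "\<dots> = (\<integral>\<^sup>+s. v s \<partial>lborel)"
    by (simp add: lborel_nn_integral_translate u_one)
  finally show ?thesis using v_one by simp
qed

lemma density_ratio_inner_bound:
  fixes fY fD fU fV :: "real \<Rightarrow> real"
  assumes nonneg: "\<And>t. 0 \<le> fY t" "\<And>t. 0 \<le> fD t" "\<And>t. 0 \<le> fU t" "\<And>t. 0 \<le> fV t"
    and [measurable]: "fU \<in> borel_measurable borel" "fV \<in> borel_measurable borel"
  shows "(\<integral>\<^sup>+y. ennreal (fY y) * ennreal (fU (x + y) * fV (y + z) / (fD (x - z) * fY y)) \<partial>lborel)
         \<le> (\<integral>\<^sup>+s. ennreal (fU (x - z + s)) * ennreal (fV s) \<partial>lborel) * ennreal (1 / fD (x - z))"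
proof -
  have pointwise: "ennreal (fY y) * ennreal (fU (x + y) * fV (y + z) / (fD (x - z) * fY y))
      \<le> ennreal (fU (x + y)) * ennreal (fV (y + z)) * ennreal (1 / fD (x - z))" for y
  proof -
    have "fY y * (fU (x + y) * fV (y + z) / (fD (x - z) * fY y))
        \<le> fU (x + y) * fV (y + z) * (1 / fD (x - z))"
      using nonneg(1)[of y] nonneg(2)[of "x - z"] nonneg(3)[of "x + y"] nonneg(4)[of "y + z"]
      by (cases "fY y = 0") auto
    then show ?thesis
      using nonneg(1)[of y] nonneg(2)[of "x - z"] nonneg(3)[of "x + y"] nonneg(4)[of "y + z"]
      by (simp add: ennreal_mult[symmetric] del: ennreal_mult ennreal_mult')
  qed
  have "(\<integral>\<^sup>+y. ennreal (fY y) * ennreal (fU (x + y) * fV (y + z) / (fD (x - z) * fY y)) \<partial>lborel)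
      \<le> (\<integral>\<^sup>+y. ennreal (fU (x + y)) * ennreal (fV (y + z)) \<partial>lborel) * ennreal (1 / fD (x - z))"
    using pointwise by (simp add: nn_integral_mono nn_integral_multc[symmetric])
  also have "(\<integral>\<^sup>+y. ennreal (fU (x + y)) * ennreal (fV (y + z)) \<partial>lborel)
      = (\<integral>\<^sup>+y. ennreal (fU (x - z + (z + y))) * ennreal (fV (z + y)) \<partial>lborel)"
    by (simp add: algebra_simps)
  also have "\<dots> = (\<integral>\<^sup>+s. ennreal (fU (x - z + s)) * ennreal (fV s) \<partial>lborel)"
    by (rule lborel_nn_integral_translate[of "\<lambda>s. ennreal (fU (x - z + s)) * ennreal (fV s)"]) simp
  finally show ?thesis .
qed

lemma density_ratio_expectation_le_one:
  fixes X Y Z :: "'a \<Rightarrow> real" and fY fD fU fV :: "real \<Rightarrow> real"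
  assumes "prob_space M"
    and indep: "prob_space.indep_var M (borel \<Otimes>\<^sub>M borel) (\<lambda>\<omega>. (X \<omega>, Z \<omega>))
                  (borel \<Otimes>\<^sub>M borel) (\<lambda>\<omega>. (Y \<omega>, Y \<omega>))"
    and dY: "distributed M lborel Y fY"
    and dD: "distributed M lborel (\<lambda>\<omega>. X \<omega> - Z \<omega>) fD"
    and dU: "distributed M lborel (\<lambda>\<omega>. X \<omega> + Y \<omega>) fU"
    and dV: "distributed M lborel (\<lambda>\<omega>. Y \<omega> + Z \<omega>) fV"
    and nonneg: "\<And>t. 0 \<le> fY t" "\<And>t. 0 \<le> fD t" "\<And>t. 0 \<le> fU t" "\<And>t. 0 \<le> fV t"
  shows "(\<integral>\<^sup>+\<omega>. ennreal (fU (X \<omega> + Y \<omega>) * fV (Y \<omega> + Z \<omega>) / (fD (X \<omega> - Z \<omega>) * fY (Y \<omega>))) \<partial>M) \<le> 1"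
proof -
  interpret prob_space M by fact
  have [measurable]: "fY \<in> borel_measurable borel" "fD \<in> borel_measurable borel"
      "fU \<in> borel_measurable borel" "fV \<in> borel_measurable borel"
    using distributed_real_measurable[OF _ dY] distributed_real_measurable[OF _ dD]
      distributed_real_measurable[OF _ dU] distributed_real_measurable[OF _ dV] nonneg
    by simp_all
  have [measurable]: "X \<in> borel_measurable M" "Z \<in> borel_measurable M"
    using indep_var_rv1[OF indep] by auto
  define ratio where "ratio x y z = fU (x + y) * fV (y + z) / (fD (x - z) * fY y)" for x y z
  define K where "K d = (\<integral>\<^sup>+s. ennreal (fU (d + s)) * ennreal (fV s) \<partial>lborel)" for d
  have [measurable]: "K \<in> borel_measurable borel" unfolding K_def by measurable
  have "(\<integral>\<^sup>+\<omega>. ennreal (ratio (X \<omega>) (Y \<omega>) (Z \<omega>)) \<partial>M)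
      = (\<integral>\<^sup>+\<omega>. (\<integral>\<^sup>+\<omega>'. ennreal (ratio (X \<omega>) (Y \<omega>') (Z \<omega>)) \<partial>M) \<partial>M)"
    using nn_integral_indep_var[OF \<open>prob_space M\<close> indep,
        of "\<lambda>p q. ennreal (ratio (fst p) (fst q) (snd p))"]
    unfolding ratio_def by simp
  also have "\<dots> = (\<integral>\<^sup>+\<omega>. (\<integral>\<^sup>+y. fY y * ennreal (ratio (X \<omega>) y (Z \<omega>)) \<partial>lborel) \<partial>M)"
    by (intro nn_integral_cong distributed_nn_integral[OF dY, symmetric]) (simp add: ratio_def)
  also have "\<dots> \<le> (\<integral>\<^sup>+\<omega>. K (X \<omega> - Z \<omega>) * ennreal (1 / fD (X \<omega> - Z \<omega>)) \<partial>M)"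
    unfolding ratio_def K_def
    by (intro nn_integral_mono density_ratio_inner_bound nonneg) measurable
  also have "\<dots> = (\<integral>\<^sup>+d. fD d * (K d * ennreal (1 / fD d)) \<partial>lborel)"
    by (rule distributed_nn_integral[OF dD, symmetric]) simp
  also have "\<dots> \<le> (\<integral>\<^sup>+d. K d \<partial>lborel)"
  proof (rule nn_integral_mono)
    fix d
    have "ennreal (fD d) * ennreal (1 / fD d) \<le> 1"
      using nonneg(2)[of d] by (cases "fD d = 0") (auto simp: ennreal_mult[symmetric])
    then have "ennreal (fD d) * (K d * ennreal (1 / fD d)) \<le> 1 * K d"
      by (metis mult.assoc mult.commute mult_right_mono zero_le)
    then show "ennreal (fD d) * (K d * ennreal (1 / fD d)) \<le> K d" by simp
  qed
  also have "\<dots> = 1"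
    unfolding K_def using distributed_nn_integral_one[OF \<open>prob_space M\<close>] dU dV
    by (intro nn_integral_cross_correlation) auto
  finally show ?thesis unfolding ratio_def .
qed

theorem mainTheorem3:
  fixes M :: "'a measure" and b :: real
    and X Y Z :: "'a \<Rightarrow> real"
    and fX fZ fY fXmZ fXpY fYpZ :: "real \<Rightarrow> real"
  assumes info: "information_space M b"
    and indep: "prob_space.indep_vars M (\<lambda>_. borel)
                  (\<lambda>i::nat. if i = 0 then X else if i = 1 then Y else Z) {0, 1, 2}"
    and dX: "distributed M lborel X fX" and nX: "\<And>x. 0 \<le> fX x"
    and dZ: "distributed M lborel Z fZ" and nZ: "\<And>x. 0 \<le> fZ x"
    and hY: "information_space.finite_entropy M b lborel Y fY"
    and hXmZ: "information_space.finite_entropy M b lborel (\<lambda>\<omega>. X \<omega> - Z \<omega>) fXmZ"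
    and hXpY: "information_space.finite_entropy M b lborel (\<lambda>\<omega>. X \<omega> + Y \<omega>) fXpY"
    and hYpZ: "information_space.finite_entropy M b lborel (\<lambda>\<omega>. Y \<omega> + Z \<omega>) fYpZ"
  shows "prob_space.entropy M b lborel (\<lambda>\<omega>. X \<omega> - Z \<omega>) + prob_space.entropy M b lborel Y
         \<le> prob_space.entropy M b lborel (\<lambda>\<omega>. X \<omega> + Y \<omega>)
           + prob_space.entropy M b lborel (\<lambda>\<omega>. Y \<omega> + Z \<omega>)"
proof -
  interpret information_space M b by fact
  note left = entropy_sum_as_expectation[OF info hXmZ hY]
    and right = entropy_sum_as_expectation[OF info hXpY hYpZ]
  have "(\<integral>\<^sup>+\<omega>. ennreal (fXpY (X \<omega> + Y \<omega>) * fYpZ (Y \<omega> + Z \<omega>)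
                        / (fXmZ (X \<omega> - Z \<omega>) * fY (Y \<omega>))) \<partial>M) \<le> 1"
    using finite_entropy_nn[OF hY] finite_entropy_nn[OF hXmZ]
      finite_entropy_nn[OF hXpY] finite_entropy_nn[OF hYpZ]
    by (intro density_ratio_expectation_le_one[OF prob_space_axioms
          indep_var_pair_third[OF prob_space_axioms indep]]
          finite_entropy_distributed[OF hY] finite_entropy_distributed[OF hXmZ]
          finite_entropy_distributed[OF hXpY] finite_entropy_distributed[OF hYpZ]) auto
  then have "(\<integral>\<omega>. log b (fXpY (X \<omega> + Y \<omega>) * fYpZ (Y \<omega> + Z \<omega>)) \<partial>M)
           \<le> (\<integral>\<omega>. log b (fXmZ (X \<omega> - Z \<omega>) * fY (Y \<omega>)) \<partial>M)"
    using left(2-4) right(2-4) b_gt_1 by (intro gibbs_inequality[OF prob_space_axioms]) simp_all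
  then show ?thesis using left(1) right(1) by simp
qed

end
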